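(* Let $F_2$ denote the free group of rank 2. Then the direct product $F_2\times F_2$, and hence any group containing a subgroup isomorphic to $F_2\times F_2$, does not embed in $GL(3,\mathbb{F})$ for any field $\mathbb{F}$. *)

theory Defs
  imports "HOL-Analysis.Analysis" "HOL-Algebra.Group"
begin

text \<open>Free group of rank 2, constructed as reduced words. A letter is a pair
  (g, e): g selects one of the two generators, e = True means the inverse of it.\<close>

type_synonym fg_letter = "bool \<times> bool"

definition fg_inv_letter :: "fg_letter \<Rightarrow> fg_letter" where
  "fg_inv_letter x = (fst x, \<not> snd x)"

fun fg_reduced :: "fg_letter list \<Rightarrow> bool" where
  "fg_reduced [] = True"
| "fg_reduced [x] = True"
| "fg_reduced (x # y # r) = (y \<noteq> fg_inv_letter x \<and> fg_reduced (y # r))"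

fun fg_push :: "fg_letter \<Rightarrow> fg_letter list \<Rightarrow> fg_letter list" where
  "fg_push x [] = [x]"
| "fg_push x (y # ys) = (if y = fg_inv_letter x then ys else x # y # ys)"

definition free_group2 :: "fg_letter list monoid" where
  "free_group2 = \<lparr> carrier = {w. fg_reduced w},
                    monoid.mult = (\<lambda>u v. foldr fg_push u v),
                    one = [] \<rparr>"

definition GL3 :: "('a::field ^ 3 ^ 3) monoid" where
  "GL3 = \<lparr> carrier = {A. invertible A}, monoid.mult = (\<lambda>A B. A ** B), one = mat 1 \<rparr>"

end

theory Submission
  imports Defs "HOL-Algebra.Algebraic_Closure_Type"
begin

(* Suppose F2 x F2 embeds into GL(3,K); passing to the algebraic closure, K may be assumed
   algebraically closed. Let a, b generate the first factor and c, d the second. Their images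
   A, B do not commute, yet both commute with the images C, D of c, d. For an eigenvalue t of
   the non-scalar matrix A, either A - t or its adjugate has rank one; being a polynomial in A,
   this rank-one matrix u f commutes with C and D, so u is a common eigenvector and f a common
   left eigenvector. If f u = 0, the flag span u < ker f is invariant under C and D. Otherwise
   C and D preserve span u + ker f: either they share an eigenvector in ker f, giving again an
   invariant flag, or every matrix commuting with both acts on ker f as a scalar, which would
   force A and B to commute. So C and D are simultaneously triangularizable. The triangular
   group is solvable of derived length 3, hence C and D satisfy a word of the third derived
   subgroup of F2 which is nontrivial in c, d, contradicting injectivity. *)

no_notation fps_nth (infixl "$" 75)

lemma matrix_mult_3_entry:
  "((A::'a::semiring_1^3^3) ** B)$i$j = A$i$1 * B$1$j + A$i$2 * B$2$j + A$i$3 * B$3$j"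
  by (simp add: matrix_matrix_mult_def sum_3)

lemma matrix_vector_mult_3_entry:
  "((A::'a::semiring_1^3^3) *v u)$i = A$i$1 * u$1 + A$i$2 * u$2 + A$i$3 * u$3"
  by (simp add: matrix_vector_mult_def sum_3)

lemma vector_matrix_mult_3_entry:
  "((f::'a::comm_semiring_1^3) v* A)$j = f$1 * A$1$j + f$2 * A$2$j + f$3 * A$3$j"
  by (simp add: vector_matrix_mult_def sum_3 mult.commute)

lemma mat3_eq_iff:
  "(A::'a^3^3) = B \<longleftrightarrow>
     A$1$1 = B$1$1 \<and> A$1$2 = B$1$2 \<and> A$1$3 = B$1$3 \<and>
     A$2$1 = B$2$1 \<and> A$2$2 = B$2$2 \<and> A$2$3 = B$2$3 \<and>
     A$3$1 = B$3$1 \<and> A$3$2 = B$3$2 \<and> A$3$3 = B$3$3"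
  by (simp add: vec_eq_iff forall_3)

lemma vec3_nonzero: "(v::'a::zero^3) \<noteq> 0 \<Longrightarrow> v$1 \<noteq> 0 \<or> v$2 \<noteq> 0 \<or> v$3 \<noteq> 0"
  by (auto simp: vec_eq_iff forall_3)

definition upper_triangular3 :: "'a::zero^3^3 \<Rightarrow> bool" where
  "upper_triangular3 A \<longleftrightarrow> A$2$1 = 0 \<and> A$3$1 = 0 \<and> A$3$2 = 0"

definition unitriangular3 :: "'a::{zero,one}^3^3 \<Rightarrow> bool" where
  "unitriangular3 A \<longleftrightarrow> upper_triangular3 A \<and> A$1$1 = 1 \<and> A$2$2 = 1 \<and> A$3$3 = 1"

definition heisenberg_center3 :: "'a::{zero,one}^3^3 \<Rightarrow> bool" where
  "heisenberg_center3 A \<longleftrightarrow> unitriangular3 A \<and> A$1$2 = 0 \<and> A$2$3 = 0"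

lemma upper_triangular3_mult:
  assumes "upper_triangular3 (A::'a::comm_ring_1^3^3)" "upper_triangular3 B"
  shows "upper_triangular3 (A ** B)"
    and "(A ** B)$1$1 = A$1$1 * B$1$1" "(A ** B)$2$2 = A$2$2 * B$2$2" "(A ** B)$3$3 = A$3$3 * B$3$3"
  using assms by (simp_all add: upper_triangular3_def matrix_mult_3_entry)

lemma upper_triangular3_right_inverse:
  assumes "upper_triangular3 (A::'a::field^3^3)" "A ** A' = mat 1"
  shows "upper_triangular3 A'"
    and "A$1$1 * A'$1$1 = 1" "A$2$2 * A'$2$2 = 1" "A$3$3 * A'$3$3 = 1"
proof -
  have "(A ** A')$i$j = (mat 1::'a^3^3)$i$j" for i j
    using assms(2) by simp
  note e = this[unfolded matrix_mult_3_entry mat_def, simplified]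
  have 33: "A$3$3 * A'$3$3 = 1" using e[of 3 3] assms(1) by (simp add: upper_triangular3_def)
  have 31: "A'$3$1 = 0" and 32: "A'$3$2 = 0"
    using e[of 3 1] e[of 3 2] assms(1) 33 by (auto simp: upper_triangular3_def)
  have 22: "A$2$2 * A'$2$2 = 1" using e[of 2 2] assms(1) 32 by (simp add: upper_triangular3_def)
  have 21: "A'$2$1 = 0" using e[of 2 1] assms(1) 22 31 by (auto simp: upper_triangular3_def)
  show "A$1$1 * A'$1$1 = 1" using e[of 1 1] assms(1) 21 31 by (simp add: upper_triangular3_def)
  show "upper_triangular3 A'" using 21 31 32 by (simp add: upper_triangular3_def)
  show "A$2$2 * A'$2$2 = 1" "A$3$3 * A'$3$3 = 1" by fact+
qed

lemma upper_triangular3_commutator: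
  fixes A B :: "'a::field^3^3"
  assumes "upper_triangular3 A" "upper_triangular3 B" "A ** A' = mat 1" "B ** B' = mat 1"
  shows "unitriangular3 (A ** B ** A' ** B')"
proof -
  note A' = upper_triangular3_right_inverse[OF assms(1,3)]
    and B' = upper_triangular3_right_inverse[OF assms(2,4)]
  have "upper_triangular3 (A ** B ** A')"
    using assms A' by (blast intro: upper_triangular3_mult)
  then show ?thesis
    using assms A' B' unfolding unitriangular3_def
    by (simp add: upper_triangular3_mult algebra_simps)
qed

lemma unitriangular3_mult:
  assumes "unitriangular3 (A::'a::comm_ring_1^3^3)" "unitriangular3 B"
  shows "unitriangular3 (A ** B)" "(A ** B)$1$2 = A$1$2 + B$1$2" "(A ** B)$2$3 = A$2$3 + B$2$3"
  using assms by (simp_all add: unitriangular3_def upper_triangular3_def matrix_mult_3_entry)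

lemma unitriangular3_right_inverse:
  assumes "unitriangular3 (A::'a::field^3^3)" "A ** A' = mat 1"
  shows "unitriangular3 A'" "A'$1$2 = - A$1$2" "A'$2$3 = - A$2$3"
proof -
  show u: "unitriangular3 A'"
    using upper_triangular3_right_inverse[of A A'] assms by (simp add: unitriangular3_def)
  have "(A ** A')$1$2 = 0" "(A ** A')$2$3 = 0"
    using assms(2) by (simp_all add: mat_def)
  then show "A'$1$2 = - A$1$2" "A'$2$3 = - A$2$3"
    using unitriangular3_mult[OF assms(1) u] by (simp_all add: eq_neg_iff_add_eq_0 add.commute)
qed

lemma unitriangular3_commutator:
  fixes A B :: "'a::field^3^3"
  assumes "unitriangular3 A" "unitriangular3 B" "A ** A' = mat 1" "B ** B' = mat 1"
  shows "heisenberg_center3 (A ** B ** A' ** B')"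
proof -
  note A' = unitriangular3_right_inverse[OF assms(1,3)]
    and B' = unitriangular3_right_inverse[OF assms(2,4)]
  have "unitriangular3 (A ** B ** A')"
    using assms A' by (blast intro: unitriangular3_mult)
  then show ?thesis
    using assms A' B' unfolding heisenberg_center3_def by (simp add: unitriangular3_mult)
qed

lemma heisenberg_center3_commute:
  "heisenberg_center3 (A::'a::comm_ring_1^3^3) \<Longrightarrow> heisenberg_center3 B \<Longrightarrow> A ** B = B ** A"
  by (simp add: heisenberg_center3_def unitriangular3_def upper_triangular3_def mat3_eq_iff
      matrix_mult_3_entry algebra_simps)

lemma heisenberg_center3_commutator:
  fixes A B :: "'a::field^3^3"
  assumes "heisenberg_center3 A" "heisenberg_center3 B" "A ** A' = mat 1" "B ** B' = mat 1"
  shows "A ** B ** A' ** B' = mat 1"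
proof -
  have "A ** B ** A' ** B' = B ** (A ** A') ** B'"
    using heisenberg_center3_commute[OF assms(1,2)] by (simp add: matrix_mul_assoc)
  then show ?thesis
    using assms(3,4) by simp
qed

definition commutator :: "('a, 'b) monoid_scheme \<Rightarrow> 'a \<Rightarrow> 'a \<Rightarrow> 'a" where
  "commutator G a b = a \<otimes>\<^bsub>G\<^esub> b \<otimes>\<^bsub>G\<^esub> inv\<^bsub>G\<^esub> a \<otimes>\<^bsub>G\<^esub> inv\<^bsub>G\<^esub> b"

text \<open>Its inner commutators
  involve p and q with both signs so that they pairwise do not commute there, which makes the
  word nontrivial.\<close>

definition derived_word3 :: "('a, 'b) monoid_scheme \<Rightarrow> 'a \<Rightarrow> 'a \<Rightarrow> 'a" where
  "derived_word3 G p q =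
     commutator G (commutator G (commutator G p q) (commutator G (inv\<^bsub>G\<^esub> p) q))
                  (commutator G (commutator G p (inv\<^bsub>G\<^esub> q)) (commutator G (inv\<^bsub>G\<^esub> p) (inv\<^bsub>G\<^esub> q)))"

lemma (in group) commutator_closed:
  "a \<in> carrier G \<Longrightarrow> b \<in> carrier G \<Longrightarrow> commutator G a b \<in> carrier G"
  by (simp add: commutator_def)

lemma (in group) derived_word3_closed:
  "a \<in> carrier G \<Longrightarrow> b \<in> carrier G \<Longrightarrow> derived_word3 G a b \<in> carrier G"
  by (simp add: derived_word3_def commutator_closed)

lemma (in group_hom) hom_commutator:
  "a \<in> carrier G \<Longrightarrow> b \<in> carrier G \<Longrightarrow> h (commutator G a b) = commutator H (h a) (h b)"
  by (simp add: commutator_def)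

lemma (in group_hom) hom_derived_word3:
  "a \<in> carrier G \<Longrightarrow> b \<in> carrier G \<Longrightarrow> h (derived_word3 G a b) = derived_word3 H (h a) (h b)"
  by (simp add: derived_word3_def hom_commutator G.commutator_closed)

lemma GL3_simps [simp]:
  "carrier GL3 = {A. invertible A}" "monoid.mult GL3 = (**)" "one GL3 = mat 1"
  by (simp_all add: GL3_def)

lemma group_GL3: "group (GL3 :: ('a::field^3^3) monoid)"
proof (rule groupI)
  show "\<exists>B\<in>carrier GL3. B \<otimes>\<^bsub>GL3\<^esub> A = \<one>\<^bsub>GL3\<^esub>" if "A \<in> carrier GL3" for A :: "'a^3^3"
    using that by (auto simp: invertible_def)
  show "\<one>\<^bsub>GL3\<^esub> \<in> (carrier GL3 :: ('a^3^3) set)"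
    by (auto simp: invertible_def)
qed (simp_all add: invertible_mult matrix_mul_assoc)

lemma GL3_right_inverse:
  "(A::'a::field^3^3) \<in> carrier GL3 \<Longrightarrow> A ** inv\<^bsub>GL3\<^esub> A = mat 1"
  using group.r_inv[OF group_GL3] by fastforce

lemma upper_triangular3_derived_word3:
  fixes A B :: "'a::field^3^3"
  assumes "A \<in> carrier GL3" "B \<in> carrier GL3" "upper_triangular3 A" "upper_triangular3 B"
  shows "derived_word3 GL3 A B = mat 1"
proof -
  interpret GL3: group "GL3 :: ('a^3^3) monoid"
    by (rule group_GL3)
  have commutator_GL3: "commutator GL3 S T = S ** T ** inv\<^bsub>GL3\<^esub> S ** inv\<^bsub>GL3\<^esub> T"
    for S T :: "'a^3^3"
    by (simp add: commutator_def)
  have inverse: "inv\<^bsub>GL3\<^esub> S \<in> carrier GL3 \<and> upper_triangular3 (inv\<^bsub>GL3\<^esub> S)"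
    if "S \<in> carrier GL3" "upper_triangular3 S" for S :: "'a^3^3"
    using upper_triangular3_right_inverse(1)[OF that(2) GL3_right_inverse[OF that(1)]]
      GL3.inv_closed[OF that(1)] by simp
  have step1: "unitriangular3 (commutator GL3 S T)"
    if "S \<in> carrier GL3" "T \<in> carrier GL3" "upper_triangular3 S" "upper_triangular3 T"
    for S T :: "'a^3^3"
    unfolding commutator_GL3 using that
    by (intro upper_triangular3_commutator GL3_right_inverse)
  have step2: "heisenberg_center3 (commutator GL3 S T)"
    if "S \<in> carrier GL3" "T \<in> carrier GL3" "unitriangular3 S" "unitriangular3 T"
    for S T :: "'a^3^3"
    unfolding commutator_GL3 using that
    by (intro unitriangular3_commutator GL3_right_inverse)
  have step3: "commutator GL3 S T = mat 1"
    if "S \<in> carrier GL3" "T \<in> carrier GL3" "heisenberg_center3 S" "heisenberg_center3 T"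
    for S T :: "'a^3^3"
    unfolding commutator_GL3 using that
    by (intro heisenberg_center3_commutator GL3_right_inverse)
  show ?thesis
    unfolding derived_word3_def using assms inverse[OF assms(1,3)] inverse[OF assms(2,4)]
    by (intro step3 step2 step1 GL3.commutator_closed) auto
qed

definition simultaneously_triangularizable3 :: "'a::field^3^3 \<Rightarrow> 'a^3^3 \<Rightarrow> bool" where
  "simultaneously_triangularizable3 C D \<longleftrightarrow>
     (\<exists>P Q. P ** Q = mat 1 \<and> upper_triangular3 (P ** C ** Q) \<and> upper_triangular3 (P ** D ** Q))"

lemma conj_mult:
  assumes "(Q::'a::semiring_1^'n^'n) ** P = mat 1"
  shows "(P ** A ** Q) ** (P ** B ** Q) = P ** (A ** B) ** Q"
proof -
  have "(P ** A ** Q) ** (P ** B ** Q) = P ** A ** (Q ** P) ** B ** Q"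
    by (simp add: matrix_mul_assoc)
  then show ?thesis
    using assms by (simp add: matrix_mul_assoc)
qed

lemma conj_inverse:
  assumes "(Q::'a::semiring_1^'n^'n) ** P = mat 1"
  shows "Q ** (P ** A ** Q) ** P = A"
proof -
  have "Q ** (P ** A ** Q) ** P = (Q ** P) ** A ** (Q ** P)"
    by (simp add: matrix_mul_assoc)
  then show ?thesis
    using assms by simp
qed

lemma simultaneously_triangularizable3_conj:
  fixes C D :: "'a::field^3^3"
  assumes "P ** Q = mat 1" "simultaneously_triangularizable3 (P ** C ** Q) (P ** D ** Q)"
  shows "simultaneously_triangularizable3 C D"
proof -
  obtain P' Q' where PQ': "P' ** Q' = mat 1"
    "upper_triangular3 (P' ** (P ** C ** Q) ** Q')" "upper_triangular3 (P' ** (P ** D ** Q) ** Q')"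
    using assms(2) unfolding simultaneously_triangularizable3_def by blast
  have "(P' ** P) ** (Q ** Q') = P' ** (P ** Q) ** Q'"
    by (simp add: matrix_mul_assoc)
  then have "(P' ** P) ** (Q ** Q') = mat 1"
    using assms(1) PQ'(1) by simp
  moreover have "P' ** (P ** G ** Q) ** Q' = (P' ** P) ** G ** (Q ** Q')" for G
    by (simp add: matrix_mul_assoc)
  ultimately show ?thesis
    unfolding simultaneously_triangularizable3_def using PQ'(2,3) by metis
qed

lemma simultaneously_triangularizable3_derived_word3:
  fixes C D :: "'a::field^3^3"
  assumes "C \<in> carrier GL3" "D \<in> carrier GL3" "simultaneously_triangularizable3 C D"
  shows "derived_word3 GL3 C D = mat 1"
proof -
  obtain P Q where PQ: "P ** Q = mat 1"
    and tri: "upper_triangular3 (P ** C ** Q)" "upper_triangular3 (P ** D ** Q)"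
    using assms(3) unfolding simultaneously_triangularizable3_def by blast
  have QP: "Q ** P = mat 1"
    using PQ matrix_left_right_inverse by blast
  have "invertible P" "invertible Q"
    using PQ QP unfolding invertible_def by blast+
  then have "(\<lambda>M. P ** M ** Q) \<in> hom GL3 GL3"
    by (auto intro!: homI simp: invertible_mult conj_mult[OF QP])
  then interpret conj: group_hom "GL3 :: ('a^3^3) monoid" GL3 "\<lambda>M. P ** M ** Q"
    by (simp add: group_hom_def group_hom_axioms_def group_GL3)
  have "P ** derived_word3 GL3 C D ** Q = derived_word3 GL3 (P ** C ** Q) (P ** D ** Q)"
    using conj.hom_derived_word3[OF assms(1,2)] by simp
  also have "\<dots> = mat 1"
    using conj.hom_closed assms(1,2) tri by (intro upper_triangular3_derived_word3) auto
  finally show ?thesis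
    using conj_inverse[OF QP, of "derived_word3 GL3 C D"] QP by simp
qed

lemma matrix_commute_add:
  "(Z::'a::comm_ring_1^'n^'n) ** A = A ** Z \<Longrightarrow> Z ** B = B ** Z \<Longrightarrow> Z ** (A + B) = (A + B) ** Z"
  by (simp add: vec_eq_iff matrix_matrix_mult_def algebra_simps sum.distrib)

lemma matrix_commute_diff:
  "(Z::'a::comm_ring_1^'n^'n) ** A = A ** Z \<Longrightarrow> Z ** B = B ** Z \<Longrightarrow> Z ** (A - B) = (A - B) ** Z"
  by (simp add: vec_eq_iff matrix_matrix_mult_def algebra_simps sum_subtractf)

lemma matrix_commute_mat: "(Z::'a::comm_ring_1^'n^'n) ** mat c = mat c ** Z"
  by (simp add: vec_eq_iff matrix_matrix_mult_def mat_def if_distrib if_distribR mult.commute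
      cong: if_cong)

lemma matrix_commute_mult:
  "(Z::'a::comm_ring_1^'n^'n) ** A = A ** Z \<Longrightarrow> Z ** B = B ** Z \<Longrightarrow> Z ** (A ** B) = (A ** B) ** Z"
  by (metis matrix_mul_assoc)

definition adjugate3 :: "'a::comm_ring_1^3^3 \<Rightarrow> 'a^3^3" where
  "adjugate3 M = vector [
     vector [M$2$2 * M$3$3 - M$2$3 * M$3$2, M$1$3 * M$3$2 - M$1$2 * M$3$3, M$1$2 * M$2$3 - M$1$3 * M$2$2],
     vector [M$2$3 * M$3$1 - M$2$1 * M$3$3, M$1$1 * M$3$3 - M$1$3 * M$3$1, M$1$3 * M$2$1 - M$1$1 * M$2$3],
     vector [M$2$1 * M$3$2 - M$2$2 * M$3$1, M$1$2 * M$3$1 - M$1$1 * M$3$2, M$1$1 * M$2$2 - M$1$2 * M$2$1]]"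

lemma trace_3: "trace (M::'a::semiring_1^3^3) = M$1$1 + M$2$2 + M$3$3"
  by (simp add: trace_def sum_3)

definition principal_minors3 :: "'a::comm_ring_1^3^3 \<Rightarrow> 'a" where
  "principal_minors3 M = (M$1$1 * M$2$2 - M$1$2 * M$2$1) + (M$1$1 * M$3$3 - M$1$3 * M$3$1)
     + (M$2$2 * M$3$3 - M$2$3 * M$3$2)"

text \<open>Cayley--Hamilton: the adjugate is a polynomial in the matrix.\<close>

lemma adjugate3_eq_poly:
  "adjugate3 (M::'a::comm_ring_1^3^3) = M ** M - mat (trace M) ** M + mat (principal_minors3 M)"
  by (simp add: mat3_eq_iff adjugate3_def matrix_mult_3_entry trace_3 principal_minors3_def
      mat_def algebra_simps)

lemma adjugate3_adjugate3: "adjugate3 (adjugate3 (M::'a::comm_ring_1^3^3)) = mat (det M) ** M"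
  unfolding mat3_eq_iff adjugate3_def by (simp add: matrix_mult_3_entry det_3 mat_def algebra_simps)

lemma matrix_commute_adjugate3:
  "(Z::'a::comm_ring_1^3^3) ** M = M ** Z \<Longrightarrow> Z ** adjugate3 M = adjugate3 M ** Z"
  unfolding adjugate3_eq_poly
  by (intro matrix_commute_add matrix_commute_diff matrix_commute_mult matrix_commute_mat)

lemma adjugate3_eq_0_minors:
  assumes "adjugate3 (M::'a::comm_ring_1^3^3) = 0"
  shows "M$i$j * M$k$l = M$i$l * M$k$j"
proof -
  have "adjugate3 M $ p $ q = 0" for p q
    using assms by simp
  note e = this[unfolded adjugate3_def, simplified]
  have "\<forall>i j k l. M$i$j * M$k$l = M$i$l * M$k$j"
    using e[of 1 1] e[of 1 2] e[of 1 3] e[of 2 1] e[of 2 2] e[of 2 3] e[of 3 1] e[of 3 2] e[of 3 3]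
    unfolding forall_3 by (simp add: algebra_simps)
  then show ?thesis by blast
qed

lemma exists_eigenvalue3: "\<exists>t. det ((M::'a::alg_closed_field^3^3) - mat t) = 0"
proof -
  define c where "c = (\<lambda>k::nat. if k = 0 then det M else if k = 1 then - principal_minors3 M
                                else if k = 2 then trace M else -1)"
  obtain t where t: "(\<Sum>k\<le>3. c k * t ^ k) = 0"
    using alg_closed[of 3 c] by (auto simp: c_def)
  have "(\<Sum>k\<le>3. c k * t ^ k) = det M - principal_minors3 M * t + trace M * t^2 - t^3"
    by (simp add: c_def numeral_3_eq_3 numeral_2_eq_2 atMost_Suc power2_eq_square power3_eq_cube)
  also have "\<dots> = det (M - mat t)"
    by (simp add: det_3 mat_def principal_minors3_def trace_3 power2_eq_square
        power3_eq_cube algebra_simps)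
  finally show ?thesis
    using t by auto
qed

definition outer_product :: "'a::times^'n \<Rightarrow> 'a^'m \<Rightarrow> 'a^'m^'n" where
  "outer_product u f = (\<chi> k l. u$k * f$l)"

lemma matrix_mult_outer_product: "((C::'a::comm_semiring_1^'n^'m) ** outer_product u f)$k$l = (C *v u)$k * f$l"
  by (simp add: matrix_matrix_mult_def matrix_vector_mult_def outer_product_def sum_distrib_right
      mult.assoc)

lemma outer_product_mult: "(outer_product u f ** (C::'a::comm_semiring_1^'n^'m))$k$l = u$k * (f v* C)$l"
  by (simp add: matrix_matrix_mult_def vector_matrix_mult_def outer_product_def sum_distrib_left
      ac_simps)

lemma adjugate3_eq_0_outer_product:
  assumes "adjugate3 (N::'a::field^3^3) = 0" "N \<noteq> 0"
  obtains u f where "u \<noteq> 0" "f \<noteq> 0" "N = outer_product u f"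
proof -
  obtain i j where ij: "N$i$j \<noteq> 0"
    using assms(2) by (auto simp: vec_eq_iff)
  define u where "u = (\<chi> k. N$k$j)"
  define f where "f = (\<chi> l. N$i$l / N$i$j)"
  have "u$i \<noteq> 0" "f$j \<noteq> 0"
    using ij by (simp_all add: u_def f_def)
  then have "u \<noteq> 0" "f \<noteq> 0"
    by auto
  moreover have "N$k$j * N$i$l / N$i$j = N$k$l" for k l
    using adjugate3_eq_0_minors[OF assms(1), of i j k l] ij by (simp add: field_simps)
  then have "N = outer_product u f"
    by (simp add: vec_eq_iff outer_product_def u_def f_def)
  ultimately show ?thesis
    using that by blast
qed

lemma commute_outer_product_eigenvector:
  fixes C :: "'a::field^'n^'n"
  assumes "f \<noteq> 0" "C ** outer_product u f = outer_product u f ** C"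
  shows "\<exists>\<mu>. C *v u = \<mu> *s u"
proof -
  obtain j where j: "f$j \<noteq> 0"
    using assms(1) by (auto simp: vec_eq_iff)
  have "(C *v u)$k * f$j = u$k * (f v* C)$j" for k
    using assms(2) by (metis matrix_mult_outer_product outer_product_mult)
  then have "C *v u = ((f v* C)$j / f$j) *s u"
    using j by (simp add: vec_eq_iff field_simps)
  then show ?thesis ..
qed

lemma commute_outer_product_left_eigenvector:
  fixes C :: "'a::field^'n^'n"
  assumes "u \<noteq> 0" "C ** outer_product u f = outer_product u f ** C"
  shows "\<exists>\<nu>. f v* C = \<nu> *s f"
proof -
  obtain i where i: "u$i \<noteq> 0"
    using assms(1) by (auto simp: vec_eq_iff)
  have "(C *v u)$i * f$l = u$i * (f v* C)$l" for l
    using assms(2) by (metis matrix_mult_outer_product outer_product_mult)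
  then have "f v* C = ((C *v u)$i / u$i) *s f"
    using i by (simp add: vec_eq_iff field_simps)
  then show ?thesis ..
qed

lemma centralizer_rank_one:
  fixes S :: "'a::alg_closed_field^3^3"
  assumes "\<forall>c. S \<noteq> mat c"
  obtains u f where "u \<noteq> 0" "f \<noteq> 0"
    "\<And>Z. Z ** S = S ** Z \<Longrightarrow> Z ** outer_product u f = outer_product u f ** Z"
proof -
  obtain t where t: "det (S - mat t) = 0"
    using exists_eigenvalue3 by blast
  define M where "M = S - mat t"
  have "M \<noteq> 0"
    using assms by (auto simp: M_def)
  have commute_M: "Z ** M = M ** Z" if "Z ** S = S ** Z" for Z
    unfolding M_def by (rule matrix_commute_diff[OF that matrix_commute_mat])
  show ?thesis
  proof (cases "adjugate3 M = 0")
    case True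
    then show ?thesis
      using adjugate3_eq_0_outer_product[OF _ \<open>M \<noteq> 0\<close>] that commute_M by metis
  next
    case False
    have "adjugate3 (adjugate3 M) = 0"
      using adjugate3_adjugate3[of M] t by (simp add: M_def)
    then show ?thesis
      using adjugate3_eq_0_outer_product[OF _ False] that commute_M matrix_commute_adjugate3 by metis
  qed
qed

definition dot_vec :: "'a::semiring_1^'n \<Rightarrow> 'a^'n \<Rightarrow> 'a" where
  "dot_vec f u = (\<Sum>i\<in>UNIV. f$i * u$i)"

lemma dot_vec_3: "dot_vec (f::'a::semiring_1^3) u = f$1 * u$1 + f$2 * u$2 + f$3 * u$3"
  by (simp add: dot_vec_def sum_3)

lemma matrix_vector_mult_axis: "(A::'a::semiring_1^'n^'m) *v axis k 1 = column k A"
  by (simp add: vec_eq_iff matrix_vector_mult_def column_def axis_def if_distrib cong: if_cong)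

lemma vector_matrix_mult_column:
  "column k (Q::'a::comm_semiring_1^'n^'n) = u \<Longrightarrow> (f v* Q)$k = dot_vec f u"
  by (auto simp: vector_matrix_mult_def dot_vec_def column_def mult.commute)

lemma vector_matrix_mult_right_inverse_nonzero:
  assumes "(Q::'a::comm_semiring_1^'n^'n) ** P = mat 1" "f \<noteq> 0"
  shows "f v* Q \<noteq> 0"
proof
  assume "f v* Q = 0"
  then have "(f v* Q) v* P = 0"
    by simp
  then show False
    using assms by (simp add: vector_matrix_mul_assoc)
qed

lemma exists_adapted_basis_transversal:
  fixes u f :: "'a::field^3"
  assumes "f \<noteq> 0" "dot_vec f u \<noteq> 0"
  obtains Q :: "'a^3^3" where "invertible Q" "column 1 Q = u" "(f v* Q)$2 = 0" "(f v* Q)$3 = 0"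
proof -
  have invertible: "invertible Q" if "det Q \<noteq> 0" for Q :: "'a^3^3"
    using that invertible_det_nz by blast
  consider "f$1 \<noteq> 0" | "f$2 \<noteq> 0" | "f$3 \<noteq> 0"
    using vec3_nonzero[OF assms(1)] by blast
  then show ?thesis
  proof cases
    case 1
    let ?Q = "vector [vector [u$1, - f$2, - f$3], vector [u$2, f$1, 0], vector [u$3, 0, f$1]] :: 'a^3^3"
    have "det ?Q = f$1 * dot_vec f u"
      by (simp add: det_3 dot_vec_3 algebra_simps)
    then show ?thesis
      using 1 assms(2) by (intro that[of ?Q] invertible)
        (simp_all add: column_def vec_eq_iff forall_3 vector_matrix_mult_3_entry algebra_simps)
  next
    case 2
    let ?Q = "vector [vector [u$1, f$2, 0], vector [u$2, - f$1, - f$3], vector [u$3, 0, f$2]] :: 'a^3^3"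
    have "det ?Q = - f$2 * dot_vec f u"
      by (simp add: det_3 dot_vec_3 algebra_simps)
    then show ?thesis
      using 2 assms(2) by (intro that[of ?Q] invertible)
        (simp_all add: column_def vec_eq_iff forall_3 vector_matrix_mult_3_entry algebra_simps)
  next
    case 3
    let ?Q = "vector [vector [u$1, f$3, 0], vector [u$2, 0, f$3], vector [u$3, - f$1, - f$2]] :: 'a^3^3"
    have "det ?Q = f$3 * dot_vec f u"
      by (simp add: det_3 dot_vec_3 algebra_simps)
    then show ?thesis
      using 3 assms(2) by (intro that[of ?Q] invertible)
        (simp_all add: column_def vec_eq_iff forall_3 vector_matrix_mult_3_entry algebra_simps)
  qed
qed

lemma exists_adapted_basis_flag:
  fixes u f :: "'a::field^3"
  assumes "u \<noteq> 0" "f \<noteq> 0" "dot_vec f u = 0"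
  obtains Q :: "'a^3^3" where "invertible Q" "column 1 Q = u" "(f v* Q)$2 = 0"
proof -
  have invertible: "invertible Q" if "det Q \<noteq> 0" for Q :: "'a^3^3"
    using that invertible_det_nz by blast
  have column: "column 1 (vector [vector [u$1, a, b], vector [u$2, c, d], vector [u$3, e, g]] :: 'a^3^3) = u"
    for a b c d e g :: 'a
    by (simp add: column_def vec_eq_iff forall_3)
  have "f$1 \<noteq> 0 \<or> f$2 \<noteq> 0 \<or> f$3 \<noteq> 0" "u$1 \<noteq> 0 \<or> u$2 \<noteq> 0 \<or> u$3 \<noteq> 0"
    using vec3_nonzero assms(1,2) by blast+
  moreover have "f$1 * u$1 + f$2 * u$2 + f$3 * u$3 = 0"
    using assms(3) by (simp add: dot_vec_3)
  \<comment> \<open>the columns of Q: u, a vector of ker f independent of u, and a coordinate vector\<close>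
  ultimately consider "f$1 \<noteq> 0" "u$3 \<noteq> 0" | "f$1 \<noteq> 0" "u$2 \<noteq> 0" | "f$2 \<noteq> 0" "u$3 \<noteq> 0"
    | "f$2 \<noteq> 0" "u$1 \<noteq> 0" | "f$3 \<noteq> 0" "u$2 \<noteq> 0" | "f$3 \<noteq> 0" "u$1 \<noteq> 0"
    by force
  then show ?thesis
  proof cases
    case 1
    then show ?thesis
      by (intro that[of "vector [vector [u$1, - f$2, 1], vector [u$2, f$1, 0], vector [u$3, 0, 0]]"]
          invertible column) (simp_all add: det_3 vector_matrix_mult_3_entry)
  next
    case 2
    then show ?thesis
      by (intro that[of "vector [vector [u$1, - f$3, 1], vector [u$2, 0, 0], vector [u$3, f$1, 0]]"]
          invertible column) (simp_all add: det_3 vector_matrix_mult_3_entry)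
  next
    case 3
    then show ?thesis
      by (intro that[of "vector [vector [u$1, f$2, 0], vector [u$2, - f$1, 1], vector [u$3, 0, 0]]"]
          invertible column) (simp_all add: det_3 vector_matrix_mult_3_entry)
  next
    case 4
    then show ?thesis
      by (intro that[of "vector [vector [u$1, 0, 0], vector [u$2, - f$3, 1], vector [u$3, f$2, 0]]"]
          invertible column) (simp_all add: det_3 vector_matrix_mult_3_entry)
  next
    case 5
    then show ?thesis
      by (intro that[of "vector [vector [u$1, f$3, 0], vector [u$2, 0, 0], vector [u$3, - f$1, 1]]"]
          invertible column) (simp_all add: det_3 vector_matrix_mult_3_entry)
  next
    case 6
    then show ?thesis
      by (intro that[of "vector [vector [u$1, 0, 0], vector [u$2, f$3, 0], vector [u$3, - f$2, 1]]"]
          invertible column) (simp_all add: det_3 vector_matrix_mult_3_entry)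
  qed
qed

definition common_eigenvector :: "'a::field^'n^'n \<Rightarrow> 'a^'n^'n \<Rightarrow> 'a^'n \<Rightarrow> bool" where
  "common_eigenvector C D w \<longleftrightarrow> w \<noteq> 0 \<and> (\<exists>a. C *v w = a *s w) \<and> (\<exists>b. D *v w = b *s w)"

lemma conj_column_eigenvector:
  fixes P Q G :: "'a::field^'n^'n"
  assumes "P ** Q = mat 1" "column k Q = u" "G *v u = \<mu> *s u"
  shows "column k (P ** G ** Q) = \<mu> *s axis k 1"
proof -
  have e: "Q *v axis k 1 = u"
    using assms(2) by (simp add: matrix_vector_mult_axis)
  have "column k (P ** G ** Q) = P *v (G *v (Q *v axis k 1))"
    by (simp add: matrix_vector_mult_axis[symmetric] matrix_vector_mul_assoc matrix_mul_assoc)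
  also have "\<dots> = \<mu> *s (P *v u)"
    using e assms(3) by (simp add: vector_scalar_commute)
  also have "\<dots> = \<mu> *s axis k 1"
    using assms(1) e[symmetric] by (simp add: matrix_vector_mul_assoc)
  finally show ?thesis .
qed

lemma conj_left_eigenvector:
  fixes P Q G :: "'a::field^'n^'n"
  assumes "Q ** P = mat 1" "f v* G = \<nu> *s f"
  shows "(f v* Q) v* (P ** G ** Q) = \<nu> *s (f v* Q)"
proof -
  have "(f v* Q) v* (P ** G ** Q) = f v* ((Q ** P) ** G ** Q)"
    by (simp add: vector_matrix_mul_assoc matrix_mul_assoc)
  also have "\<dots> = (f v* G) v* Q"
    using assms(1) by (simp add: vector_matrix_mul_assoc)
  also have "\<dots> = \<nu> *s (f v* Q)"
    using assms(2) by (simp add: scalar_vector_matrix_assoc)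
  finally show ?thesis .
qed

lemma left_eigenvector_axis1:
  assumes "g$2 = 0" "g$3 = 0" "g$1 \<noteq> 0" "g v* (G::'a::field^3^3) = \<nu> *s g"
  shows "G$1$2 = 0" "G$1$3 = 0"
  using assms(4)[THEN arg_cong[where f = "\<lambda>v. v$2"]] assms(4)[THEN arg_cong[where f = "\<lambda>v. v$3"]]
    assms(1-3) by (simp_all add: vector_matrix_mult_3_entry)

lemma left_eigenvector_axis3:
  assumes "g$1 = 0" "g$2 = 0" "g$3 \<noteq> 0" "g v* (G::'a::field^3^3) = \<nu> *s g"
  shows "G$3$1 = 0" "G$3$2 = 0"
  using assms(4)[THEN arg_cong[where f = "\<lambda>v. v$1"]] assms(4)[THEN arg_cong[where f = "\<lambda>v. v$2"]]
    assms(1-3) by (simp_all add: vector_matrix_mult_3_entry)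

lemma common_eigenvectors_flag_triangularizable3:
  fixes C D :: "'a::field^3^3"
  assumes "common_eigenvector C D u" "f \<noteq> 0" "dot_vec f u = 0"
    and "\<exists>\<nu>. f v* C = \<nu> *s f" "\<exists>\<nu>. f v* D = \<nu> *s f"
  shows "simultaneously_triangularizable3 C D"
proof -
  have "u \<noteq> 0" and eig: "\<exists>\<mu>. C *v u = \<mu> *s u" "\<exists>\<mu>. D *v u = \<mu> *s u"
    using assms(1) unfolding common_eigenvector_def by blast+
  obtain Q :: "'a^3^3" where Q: "invertible Q" "column 1 Q = u" "(f v* Q)$2 = 0"
    using exists_adapted_basis_flag[OF \<open>u \<noteq> 0\<close> assms(2,3)] by blast
  obtain P where PQ: "P ** Q = mat 1" "Q ** P = mat 1"
    using Q(1) unfolding invertible_def by blast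
  have f1: "(f v* Q)$1 = 0"
    using vector_matrix_mult_column[OF Q(2)] assms(3) by simp
  have "f v* Q \<noteq> 0"
    using vector_matrix_mult_right_inverse_nonzero[OF PQ(2) assms(2)] .
  then have f3: "(f v* Q)$3 \<noteq> 0"
    using f1 Q(3) vec3_nonzero by blast
  have triangular: "upper_triangular3 (P ** G ** Q)"
    if eigenvectors: "\<exists>\<mu>. G *v u = \<mu> *s u" "\<exists>\<nu>. f v* G = \<nu> *s f" for G :: "'a^3^3"
  proof -
    obtain \<mu> \<nu> where "G *v u = \<mu> *s u" "f v* G = \<nu> *s f"
      using eigenvectors by blast
    from conj_column_eigenvector[OF PQ(1) Q(2) this(1)]
      left_eigenvector_axis3[OF f1 Q(3) f3 conj_left_eigenvector[OF PQ(2) this(2)]]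
    show ?thesis
      unfolding upper_triangular3_def column_def
      by (simp add: vec_eq_iff axis_def)
  qed
  show ?thesis
    unfolding simultaneously_triangularizable3_def
    using PQ(1) triangular eig assms(4,5) by blast
qed

definition block_diagonal3 :: "'a::zero^3^3 \<Rightarrow> bool" where
  "block_diagonal3 A \<longleftrightarrow> A$1$2 = 0 \<and> A$1$3 = 0 \<and> A$2$1 = 0 \<and> A$3$1 = 0"

definition scalar_block3 :: "'a::zero^3^3 \<Rightarrow> bool" where
  "scalar_block3 A \<longleftrightarrow> block_diagonal3 A \<and> A$2$3 = 0 \<and> A$3$2 = 0 \<and> A$2$2 = A$3$3"

lemma scalar_block3_commute:
  "scalar_block3 (A::'a::comm_ring_1^3^3) \<Longrightarrow> scalar_block3 B \<Longrightarrow> A ** B = B ** A"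
  by (simp add: scalar_block3_def block_diagonal3_def mat3_eq_iff matrix_mult_3_entry mult.commute)

lemma orthogonal2_proportional:
  fixes a b x y :: "'a::field"
  assumes "a \<noteq> 0 \<or> b \<noteq> 0" "a * x + b * y = 0"
  shows "\<exists>t. x = t * b \<and> y = - (t * a)"
proof (cases "a = 0")
  case True
  then show ?thesis
    using assms by (intro exI[of _ "x / b"]) (simp add: field_simps)
next
  case False
  have "a * x = - (b * y)"
    using assms(2) by (simp add: eq_neg_iff_add_eq_0)
  then have "x = - y / a * b"
    using False by (simp add: field_simps)
  then show ?thesis
    using False by (intro exI[of _ "- y / a"]) simp
qed

lemma block_diagonal3_commute_entries:
  fixes C Z :: "'a::comm_ring_1^3^3"
  assumes "block_diagonal3 C" "Z ** C = C ** Z"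
  shows "Z$2$1 * C$1$1 = C$2$2 * Z$2$1 + C$2$3 * Z$3$1"
    and "Z$3$1 * C$1$1 = C$3$2 * Z$2$1 + C$3$3 * Z$3$1"
    and "C$1$1 * Z$1$2 = Z$1$2 * C$2$2 + Z$1$3 * C$3$2"
    and "C$1$1 * Z$1$3 = Z$1$2 * C$2$3 + Z$1$3 * C$3$3"
    and "Z$2$2 * C$2$2 + Z$2$3 * C$3$2 = C$2$2 * Z$2$2 + C$2$3 * Z$3$2"
    and "Z$2$2 * C$2$3 + Z$2$3 * C$3$3 = C$2$2 * Z$2$3 + C$2$3 * Z$3$3"
    and "Z$3$2 * C$2$2 + Z$3$3 * C$3$2 = C$3$2 * Z$2$2 + C$3$3 * Z$3$2"
    and "Z$3$2 * C$2$3 + Z$3$3 * C$3$3 = C$3$2 * Z$2$3 + C$3$3 * Z$3$3"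
proof -
  have "(Z ** C)$i$j = (C ** Z)$i$j" for i j
    using assms(2) by simp
  note entry = this[unfolded matrix_mult_3_entry]
  show "Z$2$1 * C$1$1 = C$2$2 * Z$2$1 + C$2$3 * Z$3$1"
    using entry[of 2 1] assms(1) by (simp add: block_diagonal3_def)
  show "Z$3$1 * C$1$1 = C$3$2 * Z$2$1 + C$3$3 * Z$3$1"
    using entry[of 3 1] assms(1) by (simp add: block_diagonal3_def)
  show "C$1$1 * Z$1$2 = Z$1$2 * C$2$2 + Z$1$3 * C$3$2"
    using entry[of 1 2] assms(1) by (simp add: block_diagonal3_def)
  show "C$1$1 * Z$1$3 = Z$1$2 * C$2$3 + Z$1$3 * C$3$3"
    using entry[of 1 3] assms(1) by (simp add: block_diagonal3_def)
  show "Z$2$2 * C$2$2 + Z$2$3 * C$3$2 = C$2$2 * Z$2$2 + C$2$3 * Z$3$2"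
    using entry[of 2 2] assms(1) by (simp add: block_diagonal3_def)
  show "Z$2$2 * C$2$3 + Z$2$3 * C$3$3 = C$2$2 * Z$2$3 + C$2$3 * Z$3$3"
    using entry[of 2 3] assms(1) by (simp add: block_diagonal3_def)
  show "Z$3$2 * C$2$2 + Z$3$3 * C$3$2 = C$3$2 * Z$2$2 + C$3$3 * Z$3$2"
    using entry[of 3 2] assms(1) by (simp add: block_diagonal3_def)
  show "Z$3$2 * C$2$3 + Z$3$3 * C$3$3 = C$3$2 * Z$2$3 + C$3$3 * Z$3$3"
    using entry[of 3 3] assms(1) by (simp add: block_diagonal3_def)
qed

text \<open>The line spanned by (0, b, -a) is invariant iff its image is orthogonal to (0, a, b).\<close>

lemma block_common_eigenvector:
  fixes C D :: "'a::field^3^3"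
  assumes "block_diagonal3 C" "block_diagonal3 D" "a \<noteq> 0 \<or> b \<noteq> 0"
    and "a * (C$2$2 * b - C$2$3 * a) + b * (C$3$2 * b - C$3$3 * a) = 0"
    and "a * (D$2$2 * b - D$2$3 * a) + b * (D$3$2 * b - D$3$3 * a) = 0"
  shows "common_eigenvector C D (vector [0, b, -a])"
proof -
  have eigenvector: "\<exists>t. G *v vector [0, b, -a] = t *s vector [0, b, -a]"
    if G: "block_diagonal3 G" "a * (G$2$2 * b - G$2$3 * a) + b * (G$3$2 * b - G$3$3 * a) = 0"
    for G :: "'a^3^3"
  proof -
    obtain t where "G$2$2 * b - G$2$3 * a = t * b" "G$3$2 * b - G$3$3 * a = - (t * a)"
      using orthogonal2_proportional[OF assms(3) G(2)] by blast
    then have "G *v vector [0, b, -a] = t *s vector [0, b, -a]"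
      using G(1) by (simp add: block_diagonal3_def vec_eq_iff forall_3 matrix_vector_mult_3_entry
          algebra_simps)
    then show ?thesis ..
  qed
  have "vector [0, b, -a] \<noteq> (0::'a^3)"
    using assms(3) by (auto simp: vec_eq_iff forall_3)
  then show ?thesis
    unfolding common_eigenvector_def using eigenvector assms by blast
qed

lemma block_centralizer_first_column:
  fixes C D Z :: "'a::field^3^3"
  assumes "block_diagonal3 C" "block_diagonal3 D" "Z ** C = C ** Z" "Z ** D = D ** Z"
    and "\<not> (\<exists>w. common_eigenvector C D w \<and> w$1 = 0)"
  shows "Z$2$1 = 0 \<and> Z$3$1 = 0"
proof (rule ccontr)
  assume nonzero: "\<not> (Z$2$1 = 0 \<and> Z$3$1 = 0)"
  define w :: "'a^3" where "w = vector [0, Z$2$1, Z$3$1]"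
  have "G *v w = G$1$1 *s w" if "block_diagonal3 G" "Z ** G = G ** Z" for G
    using block_diagonal3_commute_entries(1,2)[OF that] that(1)
    by (simp add: w_def block_diagonal3_def vec_eq_iff forall_3 matrix_vector_mult_3_entry mult.commute)
  moreover have "w \<noteq> 0" "w$1 = 0"
    using nonzero by (auto simp: w_def vec_eq_iff forall_3)
  ultimately show False
    using assms unfolding common_eigenvector_def by blast
qed

text \<open>The first row of Z is a common left eigenvector of the lower blocks, so the
  orthogonal vector is a common eigenvector.\<close>

lemma block_centralizer_first_row:
  fixes C D Z :: "'a::field^3^3"
  assumes "block_diagonal3 C" "block_diagonal3 D" "Z ** C = C ** Z" "Z ** D = D ** Z"
    and "\<not> (\<exists>w. common_eigenvector C D w \<and> w$1 = 0)"
  shows "Z$1$2 = 0 \<and> Z$1$3 = 0"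
proof (rule ccontr)
  assume "\<not> (Z$1$2 = 0 \<and> Z$1$3 = 0)"
  then have "Z$1$2 \<noteq> 0 \<or> Z$1$3 \<noteq> 0"
    by blast
  have orthogonal: "Z$1$2 * (G$2$2 * Z$1$3 - G$2$3 * Z$1$2) + Z$1$3 * (G$3$2 * Z$1$3 - G$3$3 * Z$1$2) = 0"
    if "block_diagonal3 G" "Z ** G = G ** Z" for G
    using block_diagonal3_commute_entries(3,4)[OF that] by Groebner_Basis.algebra
  have "common_eigenvector C D (vector [0, Z$1$3, - Z$1$2])"
    by (rule block_common_eigenvector[OF assms(1,2) \<open>Z$1$2 \<noteq> 0 \<or> Z$1$3 \<noteq> 0\<close>
          orthogonal[OF assms(1,3)] orthogonal[OF assms(2,4)]])
  then show False
    using assms(5) by (metis vector_3(1))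
qed

lemma exists_root_quadratic: "\<exists>t::'a::alg_closed_field. t * t - s * t + p = 0"
proof -
  define c where "c = (\<lambda>k::nat. if k = 0 then p else if k = 1 then - s else 1)"
  obtain t where t: "(\<Sum>k\<le>2. c k * t ^ k) = 0"
    using alg_closed[of 2 c] by (auto simp: c_def)
  have "(\<Sum>k\<le>2. c k * t ^ k) = t * t - s * t + p"
    by (simp add: c_def numeral_2_eq_2 atMost_Suc power2_eq_square algebra_simps)
  then show ?thesis
    using t by auto
qed

text \<open>With an eigenvalue \<tau> of the lower block of Z, a nonzero row (a, b) of that block
  minus \<tau> makes (b, -a) span its kernel, which C and D preserve.\<close>

lemma block_centralizer_scalar:
  fixes C D Z :: "'a::alg_closed_field^3^3"
  assumes "block_diagonal3 C" "block_diagonal3 D" "Z ** C = C ** Z" "Z ** D = D ** Z"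
    and "\<not> (\<exists>w. common_eigenvector C D w \<and> w$1 = 0)"
  shows "Z$2$3 = 0 \<and> Z$3$2 = 0 \<and> Z$2$2 = Z$3$3"
proof -
  obtain \<tau> where \<tau>: "\<tau> * \<tau> - (Z$2$2 + Z$3$3) * \<tau> + (Z$2$2 * Z$3$3 - Z$2$3 * Z$3$2) = 0"
    using exists_root_quadratic by blast
  have orthogonal:
    "a * (G$2$2 * b - G$2$3 * a) + b * (G$3$2 * b - G$3$3 * a) = 0"
    if "block_diagonal3 G" "Z ** G = G ** Z"
      and "(a = Z$2$2 - \<tau> \<and> b = Z$2$3) \<or> (a = Z$3$2 \<and> b = Z$3$3 - \<tau>)" for G a b
    using block_diagonal3_commute_entries(5-8)[OF that(1,2)] \<tau> that(3) by (elim disjE conjE) Groebner_Basis.algebra+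
  have row2: "Z$2$2 - \<tau> = 0 \<and> Z$2$3 = 0"
  proof (rule ccontr)
    assume "\<not> (Z$2$2 - \<tau> = 0 \<and> Z$2$3 = 0)"
    then have "Z$2$2 - \<tau> \<noteq> 0 \<or> Z$2$3 \<noteq> 0"
      by blast
    then have "common_eigenvector C D (vector [0, Z$2$3, - (Z$2$2 - \<tau>)])"
      by (rule block_common_eigenvector[OF assms(1,2)])
        (auto intro: orthogonal assms(1-4))
    then show False
      using assms(5) by (metis vector_3(1))
  qed
  have row3: "Z$3$2 = 0 \<and> Z$3$3 - \<tau> = 0"
  proof (rule ccontr)
    assume "\<not> (Z$3$2 = 0 \<and> Z$3$3 - \<tau> = 0)"
    then have "Z$3$2 \<noteq> 0 \<or> Z$3$3 - \<tau> \<noteq> 0"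
      by blast
    then have "common_eigenvector C D (vector [0, Z$3$3 - \<tau>, - Z$3$2])"
      by (rule block_common_eigenvector[OF assms(1,2)])
        (auto intro: orthogonal assms(1-4))
    then show False
      using assms(5) by (metis vector_3(1))
  qed
  show ?thesis
    using row2 row3 by simp
qed

lemma block_diagonal3_centralizer:
  fixes C D Z :: "'a::alg_closed_field^3^3"
  assumes "block_diagonal3 C" "block_diagonal3 D" "Z ** C = C ** Z" "Z ** D = D ** Z"
    and "\<not> (\<exists>w. common_eigenvector C D w \<and> w$1 = 0)"
  shows "scalar_block3 Z"
  using block_centralizer_first_column[OF assms] block_centralizer_first_row[OF assms]
    block_centralizer_scalar[OF assms]
  unfolding scalar_block3_def block_diagonal3_def by blast

lemma block_diagonal3_triangularizable:
  fixes C D S T :: "'a::alg_closed_field^3^3"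
  assumes "block_diagonal3 C" "block_diagonal3 D"
    and "S ** C = C ** S" "S ** D = D ** S" "T ** C = C ** T" "T ** D = D ** T" "S ** T \<noteq> T ** S"
  shows "simultaneously_triangularizable3 C D"
proof (cases "\<exists>w. common_eigenvector C D w \<and> w$1 = 0")
  case True
  then obtain w where w: "common_eigenvector C D w" "w$1 = 0"
    by blast
  have left: "axis 1 1 v* G = G$1$1 *s axis 1 1" if "block_diagonal3 G" for G :: "'a^3^3"
    using that by (simp add: block_diagonal3_def vec_eq_iff forall_3 vector_matrix_mult_3_entry axis_def)
  have "dot_vec (axis 1 1) w = 0"
    using w(2) by (simp add: dot_vec_3 axis_def)
  then show ?thesis
    by (rule common_eigenvectors_flag_triangularizable3[OF w(1), rotated])
      (use left[OF assms(1)] left[OF assms(2)] in \<open>auto simp: axis_eq_0_iff\<close>)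
next
  case False
  then have "scalar_block3 S" "scalar_block3 T"
    using block_diagonal3_centralizer assms(1-6) by metis+
  then show ?thesis
    using scalar_block3_commute assms(7) by blast
qed

lemma conj_block_diagonal3:
  fixes P Q G :: "'a::field^3^3"
  assumes "P ** Q = mat 1" "column 1 Q = u" "(f v* Q)$2 = 0" "(f v* Q)$3 = 0" "dot_vec f u \<noteq> 0"
    and "G *v u = \<mu> *s u" "f v* G = \<nu> *s f"
  shows "block_diagonal3 (P ** G ** Q)"
proof -
  have "Q ** P = mat 1"
    using assms(1) matrix_left_right_inverse by blast
  have "(f v* Q)$1 \<noteq> 0"
    using vector_matrix_mult_column[OF assms(2)] assms(5) by simp
  from conj_column_eigenvector[OF assms(1,2,6)]
    left_eigenvector_axis1[OF assms(3,4) this conj_left_eigenvector[OF \<open>Q ** P = mat 1\<close> assms(7)]]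
  show ?thesis
    unfolding block_diagonal3_def column_def
    by (simp add: vec_eq_iff forall_3 axis_def)
qed

lemma centralizer_noncommuting_triangularizable3:
  fixes S T C D :: "'a::alg_closed_field^3^3"
  assumes "S ** C = C ** S" "S ** D = D ** S" "T ** C = C ** T" "T ** D = D ** T" "S ** T \<noteq> T ** S"
  shows "simultaneously_triangularizable3 C D"
proof -
  have nonscalar: "\<forall>c. S \<noteq> mat c"
    using assms(5) matrix_commute_mat by metis
  obtain u f where uf: "u \<noteq> 0" "f \<noteq> 0"
    "\<And>Z. Z ** S = S ** Z \<Longrightarrow> Z ** outer_product u f = outer_product u f ** Z"
    using centralizer_rank_one[OF nonscalar] by blast
  have eigenvectors: "\<exists>\<mu>. G *v u = \<mu> *s u" "\<exists>\<nu>. f v* G = \<nu> *s f" if "S ** G = G ** S" for G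
    using commute_outer_product_eigenvector[OF uf(2)] commute_outer_product_left_eigenvector[OF uf(1)]
      uf(3)[OF that[symmetric]] by blast+
  show ?thesis
  proof (cases "dot_vec f u = 0")
    case True
    then show ?thesis
      using common_eigenvectors_flag_triangularizable3 eigenvectors assms(1,2) uf(1,2)
      unfolding common_eigenvector_def by blast
  next
    case False
    obtain Q :: "'a^3^3" where Q: "invertible Q" "column 1 Q = u" "(f v* Q)$2 = 0" "(f v* Q)$3 = 0"
      using exists_adapted_basis_transversal[OF uf(2) False] by blast
    obtain P where PQ: "P ** Q = mat 1" "Q ** P = mat 1"
      using Q(1) unfolding invertible_def by blast
    have block: "block_diagonal3 (P ** G ** Q)" if "S ** G = G ** S" for G
      using eigenvectors[OF that] conj_block_diagonal3[OF PQ(1) Q(2-4) False] by blast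
    have conj_commute: "(P ** A ** Q) ** (P ** B ** Q) = (P ** B ** Q) ** (P ** A ** Q)"
      if "A ** B = B ** A" for A B
      using that conj_mult[OF PQ(2)] by metis
    have "(P ** S ** Q) ** (P ** T ** Q) \<noteq> (P ** T ** Q) ** (P ** S ** Q)"
      using assms(5) conj_mult[OF PQ(2)] conj_inverse[OF PQ(2)] by metis
    then have "simultaneously_triangularizable3 (P ** C ** Q) (P ** D ** Q)"
      using block_diagonal3_triangularizable[OF block block] conj_commute assms by blast
    then show ?thesis
      using simultaneously_triangularizable3_conj[OF PQ(1)] by blast
  qed
qed

lemma fg_inv_letter_inv [simp]: "fg_inv_letter (fg_inv_letter x) = x"
  by (simp add: fg_inv_letter_def)

lemma fg_reduced_iff_successively: "fg_reduced xs \<longleftrightarrow> successively (\<lambda>x y. y \<noteq> fg_inv_letter x) xs"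
  by (induction xs rule: fg_reduced.induct) auto

lemma fg_reduced_tl: "fg_reduced (y # ys) \<Longrightarrow> fg_reduced ys"
  by (cases ys) auto

lemma fg_reduced_push: "fg_reduced w \<Longrightarrow> fg_reduced (fg_push x w)"
  by (cases w) (auto dest: fg_reduced_tl)

lemma fg_reduced_foldr_push: "fg_reduced v \<Longrightarrow> fg_reduced (foldr fg_push u v)"
  by (induction u) (auto intro: fg_reduced_push)

lemma fg_push_inv_cancel: "fg_reduced w \<Longrightarrow> fg_push x (fg_push (fg_inv_letter x) w) = w"
  by (cases w rule: fg_reduced.cases) auto

lemma foldr_fg_push_push:
  assumes "fg_reduced w"
  shows "foldr fg_push (fg_push x r) w = fg_push x (foldr fg_push r w)"
proof (cases r)
  case (Cons y ys)
  have "fg_reduced (foldr fg_push ys w)"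
    using assms fg_reduced_foldr_push by blast
  then show ?thesis
    using Cons fg_push_inv_cancel[of "foldr fg_push ys w" x] by auto
qed simp

lemma foldr_fg_push_assoc:
  "fg_reduced w \<Longrightarrow> foldr fg_push (foldr fg_push u v) w = foldr fg_push u (foldr fg_push v w)"
  by (induction u) (simp_all add: foldr_fg_push_push)

lemma foldr_fg_push_Nil: "fg_reduced u \<Longrightarrow> foldr fg_push u [] = u"
proof (induction u)
  case (Cons x u)
  then show ?case
    by (cases u) (auto dest: fg_reduced_tl)
qed simp

lemma foldr_fg_push_inverse: "fg_reduced w \<Longrightarrow> foldr fg_push (rev (map fg_inv_letter w)) w = []"
proof (induction w)
  case (Cons a w)
  have "foldr fg_push (rev (map fg_inv_letter (a # w))) (a # w)
      = foldr fg_push (rev (map fg_inv_letter w)) (fg_push (fg_inv_letter a) (a # w))"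
    by simp
  also have "\<dots> = foldr fg_push (rev (map fg_inv_letter w)) w"
    by simp
  finally show ?case
    using Cons fg_reduced_tl by metis
qed simp

lemma fg_reduced_inverse: "fg_reduced w \<Longrightarrow> fg_reduced (rev (map fg_inv_letter w))"
  unfolding fg_reduced_iff_successively successively_rev successively_map
  by (erule successively_mono) (metis fg_inv_letter_inv)

lemma free_group2_simps [simp]:
  "carrier free_group2 = {w. fg_reduced w}" "x \<otimes>\<^bsub>free_group2\<^esub> y = foldr fg_push x y"
  "\<one>\<^bsub>free_group2\<^esub> = []"
  by (simp_all add: free_group2_def)

lemma group_free_group2: "group free_group2"
  by (rule groupI)
    (auto simp: fg_reduced_foldr_push foldr_fg_push_assoc
      intro!: bexI[of _ "rev (map fg_inv_letter _)"] foldr_fg_push_inverse fg_reduced_inverse)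

lemma free_group2_inv: "fg_reduced w \<Longrightarrow> inv\<^bsub>free_group2\<^esub> w = rev (map fg_inv_letter w)"
  by (rule group.inv_equality[OF group_free_group2])
    (simp_all add: foldr_fg_push_inverse fg_reduced_inverse)

lemma free_group2_derived_word3: "derived_word3 free_group2 [(False, False)] [(True, False)] \<noteq> []"
  by (simp add: derived_word3_def commutator_def free_group2_inv fg_inv_letter_def)

lemma free_group2_product_generators:
  defines "F \<equiv> free_group2 \<times>\<times> free_group2"
    and "a \<equiv> ([(False, False)], [])" and "b \<equiv> ([(True, False)], [])"
    and "c \<equiv> ([], [(False, False)])" and "d \<equiv> ([], [(True, False)])"
  shows "a \<in> carrier F" "b \<in> carrier F" "c \<in> carrier F" "d \<in> carrier F"
    and "a \<otimes>\<^bsub>F\<^esub> b \<noteq> b \<otimes>\<^bsub>F\<^esub> a"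
    and "\<And>p q. p \<in> {a, b} \<Longrightarrow> q \<in> {c, d} \<Longrightarrow> p \<otimes>\<^bsub>F\<^esub> q = q \<otimes>\<^bsub>F\<^esub> p"
    and "derived_word3 F c d \<noteq> \<one>\<^bsub>F\<^esub>"
proof -
  show "a \<in> carrier F" "b \<in> carrier F" "c \<in> carrier F" "d \<in> carrier F"
    by (simp_all add: F_def a_def b_def c_def d_def)
  show "a \<otimes>\<^bsub>F\<^esub> b \<noteq> b \<otimes>\<^bsub>F\<^esub> a"
    by (simp add: F_def a_def b_def fg_inv_letter_def)
  show "p \<otimes>\<^bsub>F\<^esub> q = q \<otimes>\<^bsub>F\<^esub> p" if "p \<in> {a, b}" "q \<in> {c, d}" for p q
    using that by (auto simp: F_def a_def b_def c_def d_def)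
  define j where "j = (\<lambda>w::fg_letter list. ([] :: fg_letter list, w))"
  have "j \<in> hom free_group2 F"
    by (rule homI) (auto simp: j_def F_def foldr_fg_push_Nil)
  then interpret j: group_hom free_group2 F j
    by (simp add: group_hom_def group_hom_axioms_def group_free_group2 F_def DirProd_group)
  have "derived_word3 F c d = j (derived_word3 free_group2 [(False, False)] [(True, False)])"
    using j.hom_derived_word3[of "[(False, False)]" "[(True, False)]"] by (simp add: j_def c_def d_def)
  then show "derived_word3 F c d \<noteq> \<one>\<^bsub>F\<^esub>"
    using free_group2_derived_word3 by (simp add: j_def F_def)
qed

lemma F2xF2_not_embeddable_GL3:
  fixes \<Phi> :: "fg_letter list \<times> fg_letter list \<Rightarrow> 'a::alg_closed_field^3^3"
  assumes "\<Phi> \<in> hom (free_group2 \<times>\<times> free_group2) GL3"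
  shows "\<not> inj_on \<Phi> (carrier (free_group2 \<times>\<times> free_group2))"
proof
  let ?F = "free_group2 \<times>\<times> free_group2"
  assume inj: "inj_on \<Phi> (carrier ?F)"
  interpret \<Phi>: group_hom ?F "GL3 :: ('a^3^3) monoid" \<Phi>
    using assms by (simp add: group_hom_def group_hom_axioms_def group_GL3 group_free_group2 DirProd_group)
  obtain a b c d where elements:
    "a \<in> carrier ?F" "b \<in> carrier ?F" "c \<in> carrier ?F" "d \<in> carrier ?F"
    "a \<otimes>\<^bsub>?F\<^esub> b \<noteq> b \<otimes>\<^bsub>?F\<^esub> a"
    "\<And>p q. p \<in> {a, b} \<Longrightarrow> q \<in> {c, d} \<Longrightarrow> p \<otimes>\<^bsub>?F\<^esub> q = q \<otimes>\<^bsub>?F\<^esub> p"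
    "derived_word3 ?F c d \<noteq> \<one>\<^bsub>?F\<^esub>"
    using free_group2_product_generators by blast
  have commute: "\<Phi> p ** \<Phi> q = \<Phi> q ** \<Phi> p" if "p \<in> {a, b}" "q \<in> {c, d}" for p q
  proof -
    have pq: "p \<in> carrier ?F" "q \<in> carrier ?F"
      using that elements(1-4) by auto
    show ?thesis
      using \<Phi>.hom_mult[OF pq] \<Phi>.hom_mult[OF pq(2,1)] elements(6)[OF that] by simp
  qed
  have noncommuting: "\<Phi> a ** \<Phi> b \<noteq> \<Phi> b ** \<Phi> a"
  proof
    assume "\<Phi> a ** \<Phi> b = \<Phi> b ** \<Phi> a"
    then have "\<Phi> (a \<otimes>\<^bsub>?F\<^esub> b) = \<Phi> (b \<otimes>\<^bsub>?F\<^esub> a)"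
      using \<Phi>.hom_mult[OF elements(1,2)] \<Phi>.hom_mult[OF elements(2,1)] by (simp only: GL3_simps(2))
    then show False
      using elements(5) inj_onD[OF inj] \<Phi>.G.m_closed elements(1,2) by blast
  qed
  have triangularizable: "simultaneously_triangularizable3 (\<Phi> c) (\<Phi> d)"
    by (rule centralizer_noncommuting_triangularizable3[where S = "\<Phi> a" and T = "\<Phi> b"])
      (use noncommuting in \<open>auto intro: commute\<close>)
  have "derived_word3 GL3 (\<Phi> c) (\<Phi> d) = mat 1"
    using simultaneously_triangularizable3_derived_word3[OF \<Phi>.hom_closed \<Phi>.hom_closed triangularizable]
      elements(3,4) .
  then have "\<Phi> (derived_word3 ?F c d) = \<Phi> \<one>\<^bsub>?F\<^esub>"
    using \<Phi>.hom_derived_word3[OF elements(3,4)] \<Phi>.hom_one by simp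
  then show False
    using elements(7) inj_onD[OF inj] \<Phi>.G.derived_word3_closed[OF elements(3,4)] by blast
qed

lemma map_matrix_to_ac_mult:
  "map_matrix to_ac ((A::'a::field^'n^'n) ** B) = map_matrix to_ac A ** map_matrix to_ac B"
  by (simp add: vec_eq_iff matrix_matrix_mult_def to_ac_sum)

lemma map_matrix_to_ac_GL3: "map_matrix to_ac \<in> hom GL3 (GL3 :: ('a::field alg_closure^3^3) monoid)"
proof (rule homI)
  fix A :: "'a^3^3"
  assume "A \<in> carrier GL3"
  then obtain B where "A ** B = mat 1" "B ** A = mat 1"
    by (auto simp: invertible_def)
  moreover have "map_matrix to_ac (mat 1 :: 'a^3^3) = mat 1"
    by (simp add: vec_eq_iff mat_def)
  ultimately have "map_matrix to_ac A ** map_matrix to_ac B = mat 1"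
    "map_matrix to_ac B ** map_matrix to_ac A = mat 1"
    by (simp_all flip: map_matrix_to_ac_mult)
  then show "map_matrix to_ac A \<in> carrier GL3"
    unfolding GL3_simps invertible_def by blast
qed (simp add: map_matrix_to_ac_mult)

lemma inj_map_matrix_to_ac: "inj (map_matrix (to_ac :: 'a::field \<Rightarrow> 'a alg_closure))"
  by (rule injI) (simp add: vec_eq_iff)

lemma subgroup_iso_inj_hom:
  assumes "group G" "subgroup H G" "G\<lparr>carrier := H\<rparr> \<cong> F"
    and "h \<in> hom G K" "inj_on h (carrier G)"
  obtains \<phi> where "\<phi> \<in> hom F K" "inj_on \<phi> (carrier F)"
proof -
  obtain g where "g \<in> iso (G\<lparr>carrier := H\<rparr>) F"
    using assms(3) unfolding is_iso_def by blast
  from group.iso_set_sym[OF subgroup.subgroup_is_group[OF assms(2,1)] this]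
  have g: "inv_into H g \<in> iso F (G\<lparr>carrier := H\<rparr>)"
    by simp
  have "H \<subseteq> carrier G"
    using subgroup.subset[OF assms(2)] .
  then have "h \<in> hom (G\<lparr>carrier := H\<rparr>) K"
    using assms(4) unfolding hom_def by auto
  then have "h \<circ> inv_into H g \<in> hom F K"
    using g hom_compose unfolding iso_def by blast
  moreover have "inj_on (h \<circ> inv_into H g) (carrier F)"
  proof (rule comp_inj_on)
    show "inj_on (inv_into H g) (carrier F)" "inj_on h (inv_into H g ` carrier F)"
      using g inj_on_subset[OF assms(5) \<open>H \<subseteq> carrier G\<close>] unfolding iso_def bij_betw_def by auto
  qed
  ultimately show ?thesis
    using that by blast
qed

theorem corollary2p4:
  fixes G :: "('g, 'm) monoid_scheme"
  assumes "group G"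
    and "\<exists>H. subgroup H G \<and> G\<lparr>carrier := H\<rparr> \<cong> free_group2 \<times>\<times> free_group2"
  shows "\<not> (\<exists>h. h \<in> hom G (GL3 :: ('a::field ^ 3 ^ 3) monoid) \<and> inj_on h (carrier G))"
proof
  assume "\<exists>h. h \<in> hom G (GL3 :: ('a::field ^ 3 ^ 3) monoid) \<and> inj_on h (carrier G)"
  then obtain h where h: "h \<in> hom G (GL3 :: ('a^3^3) monoid)" "inj_on h (carrier G)"
    by blast
  obtain H where H: "subgroup H G" "G\<lparr>carrier := H\<rparr> \<cong> free_group2 \<times>\<times> free_group2"
    using assms(2) by blast
  obtain \<phi> where \<phi>: "\<phi> \<in> hom (free_group2 \<times>\<times> free_group2) (GL3 :: ('a^3^3) monoid)"
    "inj_on \<phi> (carrier (free_group2 \<times>\<times> free_group2))"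
    by (rule subgroup_iso_inj_hom[OF assms(1) H h])
  have "map_matrix to_ac \<circ> \<phi> \<in> hom (free_group2 \<times>\<times> free_group2) GL3"
    using hom_compose[OF \<phi>(1) map_matrix_to_ac_GL3] .
  moreover have "inj_on (map_matrix to_ac \<circ> \<phi>) (carrier (free_group2 \<times>\<times> free_group2))"
    using comp_inj_on[OF \<phi>(2) inj_on_subset[OF inj_map_matrix_to_ac subset_UNIV]] .
  ultimately show False
    using F2xF2_not_embeddable_GL3 by blast
qed

end
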